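(* Let $n\ge 3$ and let $C\in\mathbb{R}^{n\times n}$ be nonnegative, doubly stochastic, irreducible, with zero diagonal entries. Let $x(s)$ evolve by the Modified DeGroot-Friedkin model $x(s+1)=C^\top x(s)+X(s)x(s)-C^\top X(s)x(s)$, $X(s)=\mathrm{diag}(x(s))$, with $x(0)\in\Delta\setminus\{e_1,\dots,e_n\}$. Let $x(s)_{\min}=\min_i x_i(s)$ and $x(s)_{\max}=\max_i x_i(s)$. Then for all $s\ge 0$ and all $i$, $x(s)_{\min}\le x_i(s+1)\le x(s)_{\max}$; in particular $x(s+1)_{\min}\ge x(s)_{\min}$ and $x(s+1)_{\max}\le x(s)_{\max}$.
   Context: $\Delta=\{x\in\mathbb{R}^n: x\ge 0,\ \sum_i x_i=1\}$; $e_i$ is the $i$th standard basis vector. *)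

theory Defs
  imports "HOL-Analysis.Analysis"
begin

definition prob_simplex :: "(real ^ 'n::finite) set" where
  "prob_simplex = {x. (\<forall>i. x $ i \<ge> 0) \<and> (\<Sum>i\<in>UNIV. x $ i) = 1}"

definition std_basis :: "'n \<Rightarrow> real ^ 'n::finite" where
  "std_basis i = (\<chi> j. if j = i then 1 else 0)"

definition diag_mat :: "real ^ 'n \<Rightarrow> real ^ 'n ^ 'n" where
  "diag_mat x = (\<chi> i j. if i = j then x $ i else 0)"

definition nonneg_mat :: "real ^ 'n ^ 'n \<Rightarrow> bool" where
  "nonneg_mat C \<longleftrightarrow> (\<forall>i j. C $ i $ j \<ge> 0)"

definition doubly_stochastic :: "real ^ 'n ^ 'n::finite \<Rightarrow> bool" where
  "doubly_stochastic C \<longleftrightarrow> nonneg_mat C \<and>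
     (\<forall>i. (\<Sum>j\<in>UNIV. C $ i $ j) = 1) \<and> (\<forall>j. (\<Sum>i\<in>UNIV. C $ i $ j) = 1)"

definition irreducible_mat :: "real ^ 'n ^ 'n \<Rightarrow> bool" where
  "irreducible_mat C \<longleftrightarrow> (\<forall>i j. (i, j) \<in> {(a, b). C $ a $ b \<noteq> 0}\<^sup>+)"

definition vmin :: "real ^ 'n::finite \<Rightarrow> real" where
  "vmin x = Min (range (\<lambda>i. x $ i))"

definition vmax :: "real ^ 'n::finite \<Rightarrow> real" where
  "vmax x = Max (range (\<lambda>i. x $ i))"

end

theory Submission
  imports Defs
begin

text \<open>Since the columns of \<open>C\<close> sum to one, coordinate \<open>i\<close> of the update is the convex
  combination \<open>\<Sum>\<^sub>j C\<^sub>j\<^sub>i (x\<^sub>j - x\<^sub>j\<^sup>2 + x\<^sub>i\<^sup>2)\<close>. On the simplex \<open>x\<^sub>i + x\<^sub>j \<le> 1\<close>, and then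
  \<open>x\<^sub>j - x\<^sub>j\<^sup>2 + x\<^sub>i\<^sup>2 = x\<^sub>j + (x\<^sub>i - x\<^sub>j)(x\<^sub>i + x\<^sub>j)\<close> lies between \<open>x\<^sub>i\<close> and \<open>x\<^sub>j\<close>; so every new
  coordinate lies between the old minimum and maximum. Since the rows of \<open>C\<close> also sum to
  one, the update preserves the coordinate sum, so the trajectory stays in the simplex.\<close>

definition mdf_step :: "real ^ 'n ^ 'n \<Rightarrow> real ^ 'n \<Rightarrow> real ^ 'n::finite" where
  "mdf_step C y = transpose C *v y + diag_mat y *v y - transpose C *v (diag_mat y *v y)"

lemma diag_mat_mult_component: "(diag_mat x *v y) $ k = x $ k * y $ k"
  unfolding diag_mat_def matrix_vector_mult_def
  by (simp add: if_distrib[where f="\<lambda>a. a * _"] cong: if_cong)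

lemma transpose_mult_component: "(transpose C *v z) $ k = (\<Sum>j\<in>UNIV. C $ j $ k * z $ j)"
  by (simp add: matrix_vector_mult_def transpose_def)

lemma sum_transpose_mult_vector:
  fixes C :: "real ^ 'n ^ 'n::finite"
  assumes "\<And>j. (\<Sum>i\<in>UNIV. C $ j $ i) = 1"
  shows "(\<Sum>i\<in>UNIV. (transpose C *v z) $ i) = (\<Sum>j\<in>UNIV. z $ j)"
proof -
  have "(\<Sum>i\<in>UNIV. (transpose C *v z) $ i) = (\<Sum>j\<in>UNIV. \<Sum>i\<in>UNIV. C $ j $ i * z $ j)"
    unfolding transpose_mult_component by (rule sum.swap)
  also have "\<dots> = (\<Sum>j\<in>UNIV. z $ j)"
    using assms by (simp add: sum_distrib_right[symmetric])
  finally show ?thesis .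
qed

lemma mdf_step_component:
  fixes C :: "real ^ 'n ^ 'n::finite"
  assumes "(\<Sum>j\<in>UNIV. C $ j $ i) = 1"
  shows "mdf_step C y $ i = (\<Sum>j\<in>UNIV. C $ j $ i * (y $ j - y $ j * y $ j + y $ i * y $ i))"
proof -
  have "(\<Sum>j\<in>UNIV. C $ j $ i * (y $ j - y $ j * y $ j + y $ i * y $ i))
      = (\<Sum>j\<in>UNIV. C $ j $ i * y $ j) - (\<Sum>j\<in>UNIV. C $ j $ i * (y $ j * y $ j))
        + (\<Sum>j\<in>UNIV. C $ j $ i) * (y $ i * y $ i)"
    by (simp add: algebra_simps sum.distrib sum_subtractf sum_distrib_right sum_distrib_left)
  then show ?thesis
    using assms
    by (simp only: mdf_step_def vector_add_component vector_minus_component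
        transpose_mult_component diag_mat_mult_component)
qed

lemma sub_sq_add_sq_between:
  fixes a b :: real
  assumes "0 \<le> a" "0 \<le> b" "a + b \<le> 1"
  shows "min a b \<le> b - b * b + a * a" and "b - b * b + a * a \<le> max a b"
proof -
  have eq: "b - b * b + a * a = b + (a - b) * (a + b)"
    by (simp add: algebra_simps)
  have "(a - b) * (a + b) \<le> a - b" if "b \<le> a"
    using mult_left_le[of "a + b" "a - b"] that assms by simp
  moreover have "(b - a) * (a + b) \<le> b - a" if "a \<le> b"
    using mult_left_le[of "a + b" "b - a"] that assms by simp
  moreover have "0 \<le> (a - b) * (a + b)" if "b \<le> a"
    using that assms by simp
  moreover have "(a - b) * (a + b) \<le> 0" if "a \<le> b"
    using that assms by (simp add: mult_nonpos_nonneg)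
  ultimately show "min a b \<le> b - b * b + a * a" "b - b * b + a * a \<le> max a b"
    unfolding eq by (auto simp: min_def max_def algebra_simps)
qed

lemma convex_sum_between:
  fixes w t :: "'a \<Rightarrow> real"
  assumes w_nonneg: "\<And>j. j \<in> A \<Longrightarrow> 0 \<le> w j" and w_sum: "sum w A = 1"
    and t_between: "\<And>j. j \<in> A \<Longrightarrow> lo \<le> t j \<and> t j \<le> hi"
  shows "lo \<le> (\<Sum>j\<in>A. w j * t j) \<and> (\<Sum>j\<in>A. w j * t j) \<le> hi"
proof
  have "lo = (\<Sum>j\<in>A. w j * lo)"
    using w_sum by (simp add: sum_distrib_right[symmetric])
  also have "\<dots> \<le> (\<Sum>j\<in>A. w j * t j)"
    by (rule sum_mono) (simp add: mult_left_mono w_nonneg t_between)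
  finally show "lo \<le> (\<Sum>j\<in>A. w j * t j)" .
  have "(\<Sum>j\<in>A. w j * t j) \<le> (\<Sum>j\<in>A. w j * hi)"
    by (rule sum_mono) (simp add: mult_left_mono w_nonneg t_between)
  also have "\<dots> = hi"
    using w_sum by (simp add: sum_distrib_right[symmetric])
  finally show "(\<Sum>j\<in>A. w j * t j) \<le> hi" .
qed

lemma vmin_le: "vmin y \<le> y $ i"
  unfolding vmin_def by (rule Min_le) auto

lemma vmax_ge: "y $ i \<le> vmax y"
  unfolding vmax_def by (rule Max_ge) auto

lemma vmin_greatest: "(\<And>i. c \<le> y $ i) \<Longrightarrow> c \<le> vmin y"
  unfolding vmin_def by (subst Min_ge_iff) auto

lemma vmax_least: "(\<And>i. y $ i \<le> c) \<Longrightarrow> vmax y \<le> c"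
  unfolding vmax_def by (subst Max_le_iff) auto

lemma prob_simplex_pair_sum_le_1:
  assumes "y \<in> prob_simplex" "i \<noteq> j"
  shows "y $ i + y $ j \<le> 1"
proof -
  have "y $ i + y $ j = (\<Sum>k\<in>{i, j}. y $ k)"
    using assms(2) by simp
  also have "\<dots> \<le> (\<Sum>k\<in>UNIV. y $ k)"
    using assms(1) by (intro sum_mono2) (auto simp: prob_simplex_def)
  finally show ?thesis
    using assms(1) by (simp add: prob_simplex_def)
qed

lemma mdf_step_between_vmin_vmax:
  fixes C :: "real ^ 'n ^ 'n::finite"
  assumes "nonneg_mat C" and cols: "\<And>i. (\<Sum>j\<in>UNIV. C $ j $ i) = 1"
    and y: "y \<in> prob_simplex"
  shows "vmin y \<le> mdf_step C y $ i \<and> mdf_step C y $ i \<le> vmax y"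
proof -
  have "vmin y \<le> y $ j - y $ j * y $ j + y $ i * y $ i \<and>
        y $ j - y $ j * y $ j + y $ i * y $ i \<le> vmax y" for j
  proof (cases "i = j")
    case True
    then show ?thesis using vmin_le[of y j] vmax_ge[of y j] by simp
  next
    case False
    have "0 \<le> y $ i" "0 \<le> y $ j"
      using y by (auto simp: prob_simplex_def)
    note between = sub_sq_add_sq_between[OF this prob_simplex_pair_sum_le_1[OF y False]]
    have "vmin y \<le> min (y $ i) (y $ j)" "max (y $ i) (y $ j) \<le> vmax y"
      by (simp_all add: vmin_le vmax_ge)
    with between show ?thesis by linarith
  qed
  moreover have "0 \<le> C $ j $ i" for j
    using assms(1) by (simp add: nonneg_mat_def)
  ultimately show ?thesis
    unfolding mdf_step_component[OF cols] by (intro convex_sum_between cols) auto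
qed

lemma mdf_step_in_prob_simplex:
  fixes C :: "real ^ 'n ^ 'n::finite"
  assumes "doubly_stochastic C" "y \<in> prob_simplex"
  shows "mdf_step C y \<in> prob_simplex"
proof -
  have cols: "\<And>i. (\<Sum>j\<in>UNIV. C $ j $ i) = 1" and rows: "\<And>j. (\<Sum>i\<in>UNIV. C $ j $ i) = 1"
    using assms(1) by (auto simp: doubly_stochastic_def)
  have "0 \<le> vmin y"
    using assms(2) by (intro vmin_greatest) (simp add: prob_simplex_def)
  then have "0 \<le> mdf_step C y $ i" for i
    using mdf_step_between_vmin_vmax[OF _ cols assms(2)] assms(1)
    by (meson doubly_stochastic_def order_trans)
  moreover have "(\<Sum>i\<in>UNIV. mdf_step C y $ i) = 1"
    using assms(2)
    by (simp only: mdf_step_def vector_add_component vector_minus_component sum.distrib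
        sum_subtractf sum_transpose_mult_vector[OF rows]) (simp add: prob_simplex_def)
  ultimately show ?thesis
    by (simp add: prob_simplex_def)
qed

text \<open>Only stochasticity of \<open>C\<close> and \<open>x(0) \<in> \<Delta>\<close> are needed: the bounds hold without
  \<open>n \<ge> 3\<close>, irreducibility, the zero diagonal, or excluding the vertices \<open>e\<^sub>i\<close>.\<close>

theorem lemma4:
  fixes C :: "real ^ 'n ^ 'n" and x :: "nat \<Rightarrow> real ^ 'n"
  assumes "CARD('n) \<ge> 3"
    and "nonneg_mat C" and "doubly_stochastic C" and "irreducible_mat C"
    and "\<forall>i. C $ i $ i = 0"
    and "\<forall>s. x (Suc s) = transpose C *v x s + diag_mat (x s) *v x s
                        - transpose C *v (diag_mat (x s) *v x s)"
    and "x 0 \<in> prob_simplex - range std_basis"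
  shows "(\<forall>s i. vmin (x s) \<le> x (Suc s) $ i \<and> x (Suc s) $ i \<le> vmax (x s))
       \<and> (\<forall>s. vmin (x (Suc s)) \<ge> vmin (x s) \<and> vmax (x (Suc s)) \<le> vmax (x s))"
proof -
  have x_Suc: "x (Suc s) = mdf_step C (x s)" for s
    using assms(6) by (simp add: mdf_step_def)
  have cols: "\<And>i. (\<Sum>j\<in>UNIV. C $ j $ i) = 1"
    using assms(3) by (simp add: doubly_stochastic_def)
  have simplex: "x s \<in> prob_simplex" for s
    by (induction s) (use assms(3,7) in \<open>simp_all add: x_Suc mdf_step_in_prob_simplex\<close>)
  have between: "vmin (x s) \<le> x (Suc s) $ i \<and> x (Suc s) $ i \<le> vmax (x s)" for s i
    unfolding x_Suc using mdf_step_between_vmin_vmax[OF assms(2) cols simplex] .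
  then show ?thesis
    by (auto intro: vmin_greatest vmax_least)
qed

end
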